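(* Let $\mathbf{A}$ be an $n\times k$ matrix with i.i.d. $\mathrm{Bernoulli}(p)$ entries. Let $\mathcal{S}$ be a set of size $m>k$ drawn uniformly at random from $[n]$, let $\mathbf{A}_{\mathcal{S}}$ be the $m\times k$ submatrix formed by the rows of $\mathbf{A}$ indexed by $\mathcal{S}$, and let $\alpha=\max(p,1-p)$. Then $$\mathbb{P}\left[\mathrm{rank}_{\mathbb{R}}(\mathbf{A}_{\mathcal{S}})=k\right]\ge 1-\min\left(1,k\cdot\alpha^{m-k+1}\right).$$ *)

theory Defs
  imports "HOL-Probability.Product_PMF" "Jordan_Normal_Form.DL_Rank"
begin

definition bernoulli_matrix_pmf :: "nat \<Rightarrow> nat \<Rightarrow> real \<Rightarrow> (nat \<times> nat \<Rightarrow> bool) pmf" where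
  "bernoulli_matrix_pmf n k p = Pi_pmf ({0..<n} \<times> {0..<k}) False (\<lambda>_. bernoulli_pmf p)"

definition random_subset_pmf :: "nat \<Rightarrow> nat \<Rightarrow> nat set pmf" where
  "random_subset_pmf n m = pmf_of_set {S. S \<subseteq> {0..<n} \<and> card S = m}"

definition row_submatrix :: "(nat \<times> nat \<Rightarrow> bool) \<Rightarrow> nat set \<Rightarrow> nat \<Rightarrow> real mat" where
  "row_submatrix A S k = mat (card S) k (\<lambda>(i, j). of_bool (A (sorted_list_of_set S ! i, j)))"

definition rank_real :: "real mat \<Rightarrow> nat" where
  "rank_real M = vec_space.rank (dim_row M) M"

end

theory Submission
  imports Defs
begin

(* If the rows indexed by S span a space of dimension < k, some column j is, on those rows,
   a linear combination of the columns before it. Conditioned on all other entries, that column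
   restricted to S is an i.i.d. Bernoulli(p) vector which must land in an affine subspace spanned
   by j vectors; revealing its coordinates one at a time (Odlyzko's argument) shows this happens
   with probability at most alpha^(|S| - j). A union bound over j < k gives failure probability
   at most k alpha^(m - k + 1) for every fixed S, and averaging over S gives the claim. *)

lemma measure_bind_pmf_eq_integral:
  "measure_pmf.prob (bind_pmf M f) A = (\<integral>x. measure_pmf.prob (f x) A \<partial>M)"
proof -
  have "ennreal (measure_pmf.prob (bind_pmf M f) A)
      = (\<integral>\<^sup>+x. ennreal (measure_pmf.prob (f x) A) \<partial>M)"
    by (simp add: measure_pmf.emeasure_eq_measure[symmetric])
  also have "\<dots> = ennreal (\<integral>x. measure_pmf.prob (f x) A \<partial>M)"
    by (intro nn_integral_eq_integral measure_pmf.integrable_const_bound[where B = 1]) auto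
  finally show ?thesis
    by (simp add: integral_nonneg_AE)
qed

lemma measure_Pi_pmf_insert_bernoulli:
  assumes "finite F" "s \<notin> F" "0 \<le> p" "p \<le> 1"
  shows "measure_pmf.prob (Pi_pmf (insert s F) d (\<lambda>_. bernoulli_pmf p)) E =
             p * measure_pmf.prob (Pi_pmf F d (\<lambda>_. bernoulli_pmf p)) ((\<lambda>X. X(s := True)) -` E)
           + (1 - p) *
             measure_pmf.prob (Pi_pmf F d (\<lambda>_. bernoulli_pmf p)) ((\<lambda>X. X(s := False)) -` E)"
  using assms by (simp add: Pi_pmf_insert' map_pmf_def[symmetric] measure_bind_pmf_eq_integral)

lemma measure_Pi_pmf_le_if_sections_le:
  assumes "finite D" "C \<subseteq> D"
    and "\<And>f. measure_pmf.prob (Pi_pmf C dflt P)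
                 ((\<lambda>g x. if x \<in> D - C then f x else g x) -` E) \<le> b"
  shows "measure_pmf.prob (Pi_pmf D dflt P) E \<le> b"
proof -
  have "Pi_pmf D dflt P = Pi_pmf ((D - C) \<union> C) dflt P"
    using assms(2) by (simp add: Un_absorb2)
  also have "\<dots> = map_pmf (\<lambda>(f, g) x. if x \<in> D - C then f x else g x)
      (pair_pmf (Pi_pmf (D - C) dflt P) (Pi_pmf C dflt P))"
    using assms(1,2) by (intro Pi_pmf_union) (auto intro: finite_subset)
  also have "\<dots> = bind_pmf (Pi_pmf (D - C) dflt P)
      (\<lambda>f. map_pmf (\<lambda>g x. if x \<in> D - C then f x else g x) (Pi_pmf C dflt P))"
    by (simp add: pair_pmf_def map_bind_pmf map_pmf_def bind_assoc_pmf bind_return_pmf)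
  finally show ?thesis
    using assms(3)
    by (simp add: measure_bind_pmf_eq_integral
        measure_pmf.integral_le_const measure_pmf.integrable_const_bound[where B = 1])
qed

lemma measure_pair_pmf_ge_if_sections_ge:
  assumes "\<And>y. y \<in> set_pmf N \<Longrightarrow> c \<le> measure_pmf.prob M {x. (x, y) \<in> E}"
  shows "c \<le> measure_pmf.prob (pair_pmf M N) E"
proof -
  have "pair_pmf M N = bind_pmf N (\<lambda>y. map_pmf (\<lambda>x. (x, y)) M)"
    by (simp add: pair_pmf_def map_pmf_def bind_commute_pmf[of M])
  then have "measure_pmf.prob (pair_pmf M N) E
      = (\<integral>y. measure_pmf.prob M {x. (x, y) \<in> E} \<partial>N)"
    by (simp add: measure_bind_pmf_eq_integral vimage_def)
  also have "c \<le> \<dots>"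
    using assms
    by (intro measure_pmf.integral_ge_const AE_pmfI
        measure_pmf.integrable_const_bound[where B = 1]) auto
  finally show ?thesis .
qed

lemma set_random_subset_pmf:
  assumes "m \<le> n"
  shows "set_pmf (random_subset_pmf n m) = {S. S \<subseteq> {0..<n} \<and> card S = m}"
  unfolding random_subset_pmf_def
  using assms
  by (intro set_pmf_of_set) (auto intro: finite_subset[of _ "Pow {0..<n}"] exI[of _ "{0..<m}"])

definition bool_vecs_in_affine ::
    "'r set \<Rightarrow> ('r \<Rightarrow> real) \<Rightarrow> ('i \<Rightarrow> 'r \<Rightarrow> real) \<Rightarrow> 'i set \<Rightarrow> ('r \<Rightarrow> bool) set" where
  "bool_vecs_in_affine S a u I =
     {X. \<exists>c. \<forall>r\<in>S. of_bool (X r) = a r + (\<Sum>i\<in>I. c i * u i r)}"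

(* The equation at s determines the coefficient of u i0, so eliminating it leaves an affine
   subspace spanned by one vector fewer. *)
lemma bool_vecs_in_affine_upd_pivot:
  assumes "s \<notin> F" "finite I" "i0 \<in> I" "u i0 s \<noteq> 0"
  shows "(\<lambda>X. X(s := y)) -` bool_vecs_in_affine (insert s F) a u I
           \<subseteq> bool_vecs_in_affine F (\<lambda>r. a r + (of_bool y - a s) / u i0 s * u i0 r)
                (\<lambda>i r. u i r - u i s / u i0 s * u i0 r) (I - {i0})"
proof
  fix X assume "X \<in> (\<lambda>X. X(s := y)) -` bool_vecs_in_affine (insert s F) a u I"
  then obtain c where
    c: "\<forall>r\<in>insert s F. of_bool ((X(s := y)) r) = a r + (\<Sum>i\<in>I. c i * u i r)"
    by (auto simp: bool_vecs_in_affine_def)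
  have c_i0: "c i0 = (of_bool y - a s - (\<Sum>i\<in>I - {i0}. c i * u i s)) / u i0 s"
    using c assms by (simp add: sum.remove field_simps)
  have "of_bool (X r) = a r + (of_bool y - a s) / u i0 s * u i0 r
          + (\<Sum>i\<in>I - {i0}. c i * (u i r - u i s / u i0 s * u i0 r))" if "r \<in> F" for r
  proof -
    have "r \<noteq> s" using that assms(1) by auto
    then have "of_bool (X r) = a r + (\<Sum>i\<in>I. c i * u i r)"
      using c that by (metis fun_upd_other insert_iff)
    also have "\<dots> = a r + c i0 * u i0 r + (\<Sum>i\<in>I - {i0}. c i * u i r)"
      using assms by (simp add: sum.remove)
    also have "c i0 * u i0 r = (of_bool y - a s) / u i0 s * u i0 r
        - u i0 r / u i0 s * (\<Sum>i\<in>I - {i0}. c i * u i s)"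
      using assms(4) unfolding c_i0
      by (simp add: add_divide_distrib diff_divide_distrib algebra_simps)
    also have "(\<Sum>i\<in>I - {i0}. c i * u i r)
        = (\<Sum>i\<in>I - {i0}. c i * (u i r - u i s / u i0 s * u i0 r))
          + u i0 r / u i0 s * (\<Sum>i\<in>I - {i0}. c i * u i s)"
      by (simp add: sum_subtractf sum_distrib_left right_diff_distrib mult_ac)
    finally show ?thesis by simp
  qed
  then show "X \<in> bool_vecs_in_affine F (\<lambda>r. a r + (of_bool y - a s) / u i0 s * u i0 r)
                (\<lambda>i r. u i r - u i s / u i0 s * u i0 r) (I - {i0})"
    unfolding bool_vecs_in_affine_def by blast
qed

lemma measure_Pi_bernoulli_insert_affine_degenerate_le:
  assumes "finite F" "s \<notin> F" "0 \<le> p" "p \<le> 1" "\<forall>i\<in>I. u i s = 0"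
  shows "measure_pmf.prob (Pi_pmf (insert s F) d (\<lambda>_. bernoulli_pmf p))
             (bool_vecs_in_affine (insert s F) a u I)
           \<le> max p (1 - p) *
             measure_pmf.prob (Pi_pmf F d (\<lambda>_. bernoulli_pmf p)) (bool_vecs_in_affine F a u I)"
proof -
  let ?Q = "Pi_pmf F d (\<lambda>_. bernoulli_pmf p)"
  let ?slice = "\<lambda>y. (\<lambda>X. X(s := y)) -` bool_vecs_in_affine (insert s F) a u I"
  define P where "P = measure_pmf.prob ?Q (bool_vecs_in_affine F a u I)"
  have slice_subset:
    "?slice y \<subseteq> (if of_bool y = a s then bool_vecs_in_affine F a u I else {})" for y
    using assms(2,5) by (auto simp: bool_vecs_in_affine_def)
  have slice: "measure_pmf.prob ?Q (?slice y) \<le> (if of_bool y = a s then P else 0)" for y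
  proof (cases "of_bool y = a s")
    case True
    then show ?thesis
      using slice_subset[of y] unfolding P_def by (simp add: measure_pmf.finite_measure_mono)
  next
    case False
    then show ?thesis
      using slice_subset[of y] by simp
  qed
  have "measure_pmf.prob (Pi_pmf (insert s F) d (\<lambda>_. bernoulli_pmf p))
          (bool_vecs_in_affine (insert s F) a u I)
      = p * measure_pmf.prob ?Q (?slice True) + (1 - p) * measure_pmf.prob ?Q (?slice False)"
    using assms(1-4) by (rule measure_Pi_pmf_insert_bernoulli)
  also have "\<dots> \<le> p * (if 1 = a s then P else 0) + (1 - p) * (if 0 = a s then P else 0)"
    using slice[of True] slice[of False] assms(3,4) by (intro add_mono mult_left_mono) auto
  also have "\<dots> \<le> max p (1 - p) * P"
    by (auto simp: P_def intro: mult_right_mono)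
  finally show ?thesis
    by (simp add: P_def)
qed

lemma measure_Pi_bernoulli_insert_affine_pivot_le:
  assumes "finite F" "s \<notin> F" "0 \<le> p" "p \<le> 1" "finite I" "i0 \<in> I" "u i0 s \<noteq> 0"
    and "\<And>a'. measure_pmf.prob (Pi_pmf F d (\<lambda>_. bernoulli_pmf p))
               (bool_vecs_in_affine F a' (\<lambda>i r. u i r - u i s / u i0 s * u i0 r) (I - {i0})) \<le> B"
  shows "measure_pmf.prob (Pi_pmf (insert s F) d (\<lambda>_. bernoulli_pmf p))
           (bool_vecs_in_affine (insert s F) a u I) \<le> B"
proof -
  let ?Q = "Pi_pmf F d (\<lambda>_. bernoulli_pmf p)"
  let ?slice = "\<lambda>y. (\<lambda>X. X(s := y)) -` bool_vecs_in_affine (insert s F) a u I"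
  have slice: "measure_pmf.prob ?Q (?slice y) \<le> B" for y
    using bool_vecs_in_affine_upd_pivot[where u = u and a = a and y = y, OF assms(2,5-7)]
    by (intro order_trans[OF measure_pmf.finite_measure_mono assms(8)]) auto
  have "measure_pmf.prob (Pi_pmf (insert s F) d (\<lambda>_. bernoulli_pmf p))
          (bool_vecs_in_affine (insert s F) a u I)
      = p * measure_pmf.prob ?Q (?slice True) + (1 - p) * measure_pmf.prob ?Q (?slice False)"
    using assms(1-4) by (rule measure_Pi_pmf_insert_bernoulli)
  also have "\<dots> \<le> p * B + (1 - p) * B"
    using slice assms(3,4) by (intro add_mono mult_left_mono) auto
  finally show ?thesis
    by (simp add: algebra_simps)
qed

lemma measure_Pi_bernoulli_bool_vecs_in_affine_le:
  assumes "finite S" "finite I" "0 \<le> p" "p \<le> 1"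
  shows "measure_pmf.prob (Pi_pmf S d (\<lambda>_. bernoulli_pmf p)) (bool_vecs_in_affine S a u I)
           \<le> max p (1 - p) ^ (card S - card I)"
  using assms(1,2)
proof (induction S arbitrary: I a u rule: finite_induct)
  case empty
  then show ?case by simp
next
  case (insert s F)
  define \<alpha> where "\<alpha> = max p (1 - p)"
  have \<alpha>: "0 \<le> \<alpha>" "\<alpha> \<le> 1"
    using assms(3,4) by (auto simp: \<alpha>_def)
  show ?case
  proof (cases "\<forall>i\<in>I. u i s = 0")
    case True
    have "measure_pmf.prob (Pi_pmf (insert s F) d (\<lambda>_. bernoulli_pmf p))
            (bool_vecs_in_affine (insert s F) a u I)
        \<le> \<alpha> * measure_pmf.prob (Pi_pmf F d (\<lambda>_. bernoulli_pmf p)) (bool_vecs_in_affine F a u I)"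
      unfolding \<alpha>_def using insert.hyps assms(3,4) True
      by (rule measure_Pi_bernoulli_insert_affine_degenerate_le)
    also have "\<dots> \<le> \<alpha> * \<alpha> ^ (card F - card I)"
      using insert.IH[OF insert.prems] \<alpha> by (simp add: \<alpha>_def mult_left_mono)
    also have "\<dots> = \<alpha> ^ Suc (card F - card I)"
      by simp
    also have "\<dots> \<le> \<alpha> ^ (card (insert s F) - card I)"
      using insert.hyps \<alpha> by (intro power_decreasing) auto
    finally show ?thesis
      by (simp add: \<alpha>_def)
  next
    case False
    then obtain i0 where i0: "i0 \<in> I" "u i0 s \<noteq> 0" by blast
    have "0 < card I"
      using insert.prems i0(1) card_gt_0_iff by blast
    then have "card F - card (I - {i0}) = card (insert s F) - card I"
      using insert.hyps insert.prems i0(1) by (simp add: card_Diff_singleton)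
    then show ?thesis
      using insert.IH[of "I - {i0}"] insert.hyps insert.prems assms(3,4) i0
      by (intro measure_Pi_bernoulli_insert_affine_pivot_le) auto
  qed
qed

lemma kernel_vector_imp_col_lincomb_prev_cols:
  fixes M :: "'a :: field mat"
  assumes M: "M \<in> carrier_mat m k"
    and v: "v \<in> carrier_vec k" "v \<noteq> 0\<^sub>v k" "M *\<^sub>v v = 0\<^sub>v m"
  shows "\<exists>j<k. \<exists>c. \<forall>q<m. M $$ (q, j) = (\<Sum>i<j. c i * M $$ (q, i))"
proof -
  define J where "J = {i. i < k \<and> vec_index v i \<noteq> 0}"
  have "J \<noteq> {}" "finite J"
    using v(1,2) by (auto simp: J_def vec_eq_iff)
  define j where "j = Max J"
  have j: "j < k" "vec_index v j \<noteq> 0"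
    using Max_in[OF \<open>finite J\<close> \<open>J \<noteq> {}\<close>] by (auto simp: j_def J_def)
  have above_j: "vec_index v i = 0" if "j < i" "i < k" for i
  proof (rule ccontr)
    assume "vec_index v i \<noteq> 0"
    then have "i \<le> j"
      using that(2) Max_ge[OF \<open>finite J\<close>] by (simp add: j_def J_def)
    then show False
      using that(1) by simp
  qed
  have "M $$ (q, j) = (\<Sum>i<j. (- vec_index v i / vec_index v j) * M $$ (q, i))"
    if q: "q < m" for q
  proof -
    have "0 = vec_index (M *\<^sub>v v) q" using v(3) q by simp
    also have "\<dots> = (\<Sum>i\<in>{0..<k}. M $$ (q, i) * vec_index v i)"
      using M v(1) q by (simp add: mult_mat_vec_def scalar_prod_def)
    also have "\<dots> = (\<Sum>i<Suc j. M $$ (q, i) * vec_index v i)"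
      using j(1) above_j by (intro sum.mono_neutral_right) auto
    also have "\<dots> = M $$ (q, j) * vec_index v j + (\<Sum>i<j. M $$ (q, i) * vec_index v i)"
      by simp
    finally have "M $$ (q, j) * vec_index v j + (\<Sum>i<j. M $$ (q, i) * vec_index v i) = 0"
      by (rule sym)
    then have "M $$ (q, j) * vec_index v j = - (\<Sum>i<j. M $$ (q, i) * vec_index v i)"
      by (rule eq_neg_iff_add_eq_0[THEN iffD2])
    then have "M $$ (q, j) = - (\<Sum>i<j. M $$ (q, i) * vec_index v i) / vec_index v j"
      using j(2) by (simp add: field_simps)
    also have "\<dots> = (\<Sum>i<j. (- vec_index v i / vec_index v j) * M $$ (q, i))"
      by (simp add: sum_divide_distrib sum_negf mult.commute)
    finally show ?thesis .
  qed
  with j(1) show ?thesis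
    by (intro exI[of _ j] conjI exI[of _ "\<lambda>i. - vec_index v i / vec_index v j"]) auto
qed

lemma rank_deficient_imp_col_lincomb_prev_cols:
  fixes M :: "'a :: field mat"
  assumes M: "M \<in> carrier_mat m k" and rank: "vec_space.rank m M \<noteq> k"
  shows "\<exists>j<k. \<exists>c. \<forall>q<m. M $$ (q, j) = (\<Sum>i<j. c i * M $$ (q, i))"
proof (cases "distinct (cols M)")
  case True
  interpret vec_space "TYPE('a)" m .
  have "lin_dep (set (cols M))"
    using lin_indpt_full_rank[OF M True] rank by blast
  then obtain v where "v \<in> carrier_vec k" "v \<noteq> 0\<^sub>v k" "M *\<^sub>v v = 0\<^sub>v m"
    using lin_depE[OF M _ True] by blast
  then show ?thesis
    using M by (rule kernel_vector_imp_col_lincomb_prev_cols[rotated])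
next
  case False
  then obtain a b where ab: "a < b" "b < k" "col M a = col M b"
    using M by (auto simp: cols_def distinct_conv_nth linorder_neq_iff)
  have "M $$ (q, b) = (\<Sum>i<b. (if i = a then 1 else 0) * M $$ (q, i))" if "q < m" for q
  proof -
    have "M $$ (q, b) = vec_index (col M b) q"
      using ab(2) M that by simp
    also have "\<dots> = vec_index (col M a) q"
      using ab(3) by simp
    also have "\<dots> = M $$ (q, a)"
      using ab(1,2) M that by simp
    also have "\<dots> = (\<Sum>i<b. if i = a then M $$ (q, i) else 0)"
      using ab(1) by simp
    also have "\<dots> = (\<Sum>i<b. (if i = a then 1 else 0) * M $$ (q, i))"
      by (intro sum.cong) auto
    finally show ?thesis .
  qed
  with ab(2) show ?thesis
    by (intro exI[of _ b] conjI exI[of _ "\<lambda>i. if i = a then 1 else 0"]) auto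
qed

definition col_in_span_of_prev_cols :: "(nat \<times> nat \<Rightarrow> bool) \<Rightarrow> nat set \<Rightarrow> nat \<Rightarrow> bool"
  where "col_in_span_of_prev_cols A S j \<longleftrightarrow>
    (\<exists>c. \<forall>r\<in>S. (of_bool (A (r, j)) :: real) = (\<Sum>i<j. c i * of_bool (A (r, i))))"

lemma rank_row_submatrix_deficient_imp_col_in_span:
  assumes "finite S" "rank_real (row_submatrix A S k) \<noteq> k"
  shows "\<exists>j<k. col_in_span_of_prev_cols A S j"
proof -
  define M where "M = row_submatrix A S k"
  have M: "M \<in> carrier_mat (card S) k"
    by (simp add: M_def row_submatrix_def)
  then obtain j c where j: "j < k"
    and c: "\<forall>q<card S. M $$ (q, j) = (\<Sum>i<j. c i * M $$ (q, i))"
    using rank_deficient_imp_col_lincomb_prev_cols[OF M] assms(2)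
    by (auto simp: M_def rank_real_def)
  have "(of_bool (A (r, j)) :: real) = (\<Sum>i<j. c i * of_bool (A (r, i)))" if "r \<in> S" for r
  proof -
    obtain q where q: "q < card S" "sorted_list_of_set S ! q = r"
      using \<open>r \<in> S\<close> assms(1)
      by (metis in_set_conv_nth length_sorted_list_of_set set_sorted_list_of_set)
    have M_entry: "M $$ (q, i) = of_bool (A (r, i))" if "i < k" for i
      using q that by (simp add: M_def row_submatrix_def)
    have "(of_bool (A (r, j)) :: real) = M $$ (q, j)"
      using j by (simp add: M_entry)
    also have "\<dots> = (\<Sum>i<j. c i * M $$ (q, i))"
      using c q(1) by blast
    also have "\<dots> = (\<Sum>i<j. c i * of_bool (A (r, i)))"
      using j by (intro sum.cong) (simp_all add: M_entry)
    finally show ?thesis .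
  qed
  with j show ?thesis
    unfolding col_in_span_of_prev_cols_def by blast
qed

lemma col_in_span_of_prev_cols_section_subset:
  fixes f :: "nat \<times> nat \<Rightarrow> bool"
  assumes "S \<subseteq> {0..<n}" "j < k"
  shows "(\<lambda>g x. if x \<in> {0..<n} \<times> {0..<k} - S \<times> {j} then f x else g x)
             -` {A. col_in_span_of_prev_cols A S j}
           \<subseteq> bool_vecs_in_affine (S \<times> {j}) (\<lambda>_. 0) (\<lambda>i x. of_bool (f (fst x, i))) {..<j}"
    (is "?merge -` _ \<subseteq> _")
proof
  fix g assume "g \<in> ?merge -` {A. col_in_span_of_prev_cols A S j}"
  then have "col_in_span_of_prev_cols (?merge g) S j"
    by simp
  then obtain c where c: "\<forall>r\<in>S. (of_bool (?merge g (r, j)) :: real)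
      = (\<Sum>i<j. c i * of_bool (?merge g (r, i)))"
    unfolding col_in_span_of_prev_cols_def by blast
  have "of_bool (g x) = 0 + (\<Sum>i<j. c i * of_bool (f (fst x, i)))"
    if x: "x \<in> S \<times> {j}" for x
  proof -
    obtain r where r: "x = (r, j)" "r \<in> S"
      using x by auto
    have "(\<Sum>i<j. c i * of_bool (?merge g (r, i)))
        = (\<Sum>i<j. c i * (of_bool (f (r, i)) :: real))"
      using r(2) assms by (intro sum.cong) auto
    then show ?thesis
      using c r by simp
  qed
  then show "g \<in> bool_vecs_in_affine (S \<times> {j}) (\<lambda>_. 0)
                 (\<lambda>i x. of_bool (f (fst x, i))) {..<j}"
    unfolding bool_vecs_in_affine_def by blast
qed

lemma prob_col_in_span_of_prev_cols_le:
  assumes "0 \<le> p" "p \<le> 1" "S \<subseteq> {0..<n}" "j < k"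
  shows "measure_pmf.prob (bernoulli_matrix_pmf n k p) {A. col_in_span_of_prev_cols A S j}
           \<le> max p (1 - p) ^ (card S - j)"
  unfolding bernoulli_matrix_pmf_def
proof (rule measure_Pi_pmf_le_if_sections_le)
  show "finite ({0..<n} \<times> {0..<k})" "S \<times> {j} \<subseteq> {0..<n} \<times> {0..<k}"
    using assms(3,4) by auto
  fix f :: "nat \<times> nat \<Rightarrow> bool"
  let ?Q = "Pi_pmf (S \<times> {j}) False (\<lambda>_. bernoulli_pmf p)"
  let ?merge = "\<lambda>g x. if x \<in> {0..<n} \<times> {0..<k} - S \<times> {j} then f x else g x"
  have "measure_pmf.prob ?Q (?merge -` {A. col_in_span_of_prev_cols A S j})
      \<le> measure_pmf.prob ?Q
           (bool_vecs_in_affine (S \<times> {j}) (\<lambda>_. 0) (\<lambda>i x. of_bool (f (fst x, i))) {..<j})"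
    using col_in_span_of_prev_cols_section_subset[OF assms(3,4)]
    by (rule measure_pmf.finite_measure_mono) simp
  also have "\<dots> \<le> max p (1 - p) ^ (card (S \<times> {j}) - card {..<j})"
    using assms(1-3) finite_subset by (intro measure_Pi_bernoulli_bool_vecs_in_affine_le) auto
  finally show "measure_pmf.prob ?Q (?merge -` {A. col_in_span_of_prev_cols A S j})
      \<le> max p (1 - p) ^ (card S - j)"
    by (simp add: card_cartesian_product)
qed

lemma prob_rank_row_submatrix_eq_ge:
  assumes "0 \<le> p" "p \<le> 1" "S \<subseteq> {0..<n}" "k \<le> card S"
  shows "measure_pmf.prob (bernoulli_matrix_pmf n k p) {A. rank_real (row_submatrix A S k) = k}
           \<ge> 1 - real k * max p (1 - p) ^ (card S - k + 1)"
proof -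
  let ?M = "bernoulli_matrix_pmf n k p"
  define \<alpha> where "\<alpha> = max p (1 - p)"
  have "finite S"
    using assms(3) finite_subset by blast
  have "measure_pmf.prob ?M {A. rank_real (row_submatrix A S k) \<noteq> k}
        \<le> measure_pmf.prob ?M (\<Union>j<k. {A. col_in_span_of_prev_cols A S j})"
    using rank_row_submatrix_deficient_imp_col_in_span[OF \<open>finite S\<close>]
    by (intro measure_pmf.finite_measure_mono) auto
  also have "\<dots> \<le> (\<Sum>j<k. measure_pmf.prob ?M {A. col_in_span_of_prev_cols A S j})"
    by (rule measure_pmf.finite_measure_subadditive_finite) auto
  also have "\<dots> \<le> (\<Sum>j<k. \<alpha> ^ (card S - k + 1))"
  proof (rule sum_mono)
    fix j assume "j \<in> {..<k}"
    then have "measure_pmf.prob ?M {A. col_in_span_of_prev_cols A S j} \<le> \<alpha> ^ (card S - j)"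
      unfolding \<alpha>_def using assms(1-3) by (intro prob_col_in_span_of_prev_cols_le) auto
    also have "\<dots> \<le> \<alpha> ^ (card S - k + 1)"
      using \<open>j \<in> {..<k}\<close> assms by (intro power_decreasing) (auto simp: \<alpha>_def)
    finally show "measure_pmf.prob ?M {A. col_in_span_of_prev_cols A S j} \<le> \<alpha> ^ (card S - k + 1)" .
  qed
  finally have "measure_pmf.prob ?M {A. rank_real (row_submatrix A S k) \<noteq> k}
      \<le> real k * \<alpha> ^ (card S - k + 1)"
    by simp
  moreover have "measure_pmf.prob ?M {A. rank_real (row_submatrix A S k) = k}
      = 1 - measure_pmf.prob ?M {A. rank_real (row_submatrix A S k) \<noteq> k}"
    using measure_pmf.prob_compl[of "{A. rank_real (row_submatrix A S k) \<noteq> k}" ?M]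
    by (simp add: Compl_eq_Diff_UNIV[symmetric] Collect_neg_eq[symmetric])
  ultimately show ?thesis
    by (simp add: \<alpha>_def)
qed

theorem lemma4:
  fixes n k m :: nat and p :: real
  assumes "0 \<le> p" "p \<le> 1" "k < m" "m \<le> n"
  shows "measure_pmf.prob (pair_pmf (bernoulli_matrix_pmf n k p) (random_subset_pmf n m))
           {(A, S). rank_real (row_submatrix A S k) = k}
         \<ge> 1 - min 1 (real k * (max p (1 - p)) ^ (m - k + 1))"
proof (rule measure_pair_pmf_ge_if_sections_ge)
  let ?M = "bernoulli_matrix_pmf n k p"
  fix S assume "S \<in> set_pmf (random_subset_pmf n m)"
  then have "S \<subseteq> {0..<n}" "card S = m"
    using set_random_subset_pmf[OF assms(4)] by auto
  then have "1 - real k * max p (1 - p) ^ (m - k + 1)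
      \<le> measure_pmf.prob ?M {A. rank_real (row_submatrix A S k) = k}"
    using prob_rank_row_submatrix_eq_ge[of p S n k] assms(1-3) by simp
  moreover have "0 \<le> measure_pmf.prob ?M {A. rank_real (row_submatrix A S k) = k}"
    by simp
  ultimately have "1 - min 1 (real k * max p (1 - p) ^ (m - k + 1))
      \<le> measure_pmf.prob ?M {A. rank_real (row_submatrix A S k) = k}"
    by linarith
  then show "1 - min 1 (real k * max p (1 - p) ^ (m - k + 1))
      \<le> measure_pmf.prob ?M {A. (A, S) \<in> {(A, S). rank_real (row_submatrix A S k) = k}}"
    by simp
qed

end
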